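(* For all $m,n\in\mathbf{N}_0$, $$ \left[{n+m+1}\atop{m+1}\right]_q=\sum_{j=0}^{n}q^{(m+1)j}\left[{n+m-j}\atop{m}\right]_q, $$ $$ \left[{n+m+2}\atop{m+2}\right]_q=\frac12\sum_{\substack{j,k\ge 0\\ j+k\le n}}\left[{n+m-j-k}\atop{m}\right]_q\,q^{\,n-(j+k)}\left(q^{(m+2)j}+q^{(m+2)k}\right). $$
   Context: Here $q$ is a variable (e.g. $0<q<1$), $(q)_j:=(1-q)(1-q^2)\cdots(1-q^j)$ for $j\in\mathbf{N}$, $(q)_0:=1$, and $\left[{n}\atop{k}\right]_q:=\dfrac{(q)_n}{(q)_k\,(q)_{n-k}}$ denotes the $q$-binomial coefficient (Gaussian polynomial) for integers $0\le k\le n$. $\mathbf{N}_0=\{0,1,2,\dots\}$. *)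

theory Defs
  imports Complex_Main
begin

definition qpoch :: "real \<Rightarrow> nat \<Rightarrow> real" where
  "qpoch q j = (\<Prod>i=1..j. 1 - q ^ i)"

definition qbinom :: "real \<Rightarrow> nat \<Rightarrow> nat \<Rightarrow> real" where
  "qbinom q n k = qpoch q n / (qpoch q k * qpoch q (n - k))"

end

theory Submission
  imports Defs
begin

text \<open>Both q-Pascal recurrences give a q-analogue of the hockey-stick identity
  \<open>C(n+m+1, m+1) = \<Sum>j\<le>n. C(n+m-j, m)\<close>, weighting the terms either by \<open>q^((m+1)j)\<close> or by
  \<open>q^(n-k)\<close>; the first is the first claim. For the second, the summand is symmetric in
  \<open>j, k\<close> up to the factor \<open>q^((m+2)j) + q^((m+2)k)\<close>, so half the double sum equals the sum
  with the factor \<open>q^((m+2)j)\<close> alone. Summing over \<open>k\<close> with the second hockey-stick identity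
  leaves \<open>\<Sum>j. q^((m+2)j) [n-j+m+1, m+1]\<close>, which is the first identity for \<open>m+1\<close>.\<close>

lemma qpoch_Suc: "qpoch q (Suc n) = qpoch q n * (1 - q ^ Suc n)"
  unfolding qpoch_def by (simp add: prod.nat_ivl_Suc')

lemma qpoch_nonzero:
  assumes "\<bar>q\<bar> < 1"
  shows "qpoch q n \<noteq> 0"
proof -
  have "\<bar>q ^ i\<bar> < 1" if "i \<ge> 1" for i
    using assms that by (simp add: power_abs power_less_one_iff)
  then show ?thesis
    unfolding qpoch_def by (fastforce simp: prod_zero_iff)
qed

lemma qbinom_self:
  assumes "\<bar>q\<bar> < 1"
  shows "qbinom q n n = 1"
  using qpoch_nonzero[OF assms] by (simp add: qbinom_def qpoch_def)

text \<open>The hypothesis \<open>k < n\<close> is needed: \<open>qbinom q n (Suc n)\<close> is not \<open>0\<close> but the junk value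
  \<open>qpoch q n / qpoch q (Suc n)\<close>.\<close>

lemma qbinom_Suc_Suc:
  assumes "\<bar>q\<bar> < 1" and "k < n"
  shows "qbinom q (Suc n) (Suc k) = qbinom q n k + q ^ Suc k * qbinom q n (Suc k)"
    and "qbinom q (Suc n) (Suc k) = q ^ (n - k) * qbinom q n k + qbinom q n (Suc k)"
proof -
  obtain d where d: "n - k = Suc d"
    using assms(2) by (metis Suc_diff_Suc)
  then have diffs: "n - Suc k = d" "Suc n - Suc k = Suc d"
    by simp_all
  have "Suc n = Suc k + Suc d"
    using d assms(2) by simp
  then have pow: "q ^ Suc n = q ^ Suc k * q ^ Suc d"
    by (metis power_add)
  note nz = qpoch_nonzero[OF assms(1)]
  have "1 - q ^ Suc k \<noteq> 0" "1 - q ^ Suc d \<noteq> 0"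
    using nz[of "Suc k"] nz[of "Suc d"] by (auto simp: qpoch_Suc)
  with nz[of k] nz[of d]
  show "qbinom q (Suc n) (Suc k) = qbinom q n k + q ^ Suc k * qbinom q n (Suc k)"
    and "qbinom q (Suc n) (Suc k) = q ^ (n - k) * qbinom q n k + qbinom q n (Suc k)"
    unfolding qbinom_def d diffs qpoch_Suc pow
    by (simp_all add: divide_simps) (simp_all add: algebra_simps)
qed

lemma q_hockey_stick:
  assumes "\<bar>q\<bar> < 1"
  shows "qbinom q (n + m + 1) (m + 1) = (\<Sum>j=0..n. q ^ ((m + 1) * j) * qbinom q (n + m - j) m)"
proof (induction n)
  case 0
  show ?case using qbinom_self[OF assms] by simp
next
  case (Suc n)
  have "qbinom q (Suc n + m + 1) (m + 1) =
      qbinom q (n + m + 1) m + q ^ (m + 1) * qbinom q (n + m + 1) (m + 1)"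
    using qbinom_Suc_Suc(1)[OF assms, of m "n + m + 1"] by simp
  also have "\<dots> = qbinom q (Suc n + m) m +
      (\<Sum>j=0..n. q ^ ((m + 1) * Suc j) * qbinom q (Suc n + m - Suc j) m)"
    unfolding Suc by (simp add: sum_distrib_left power_add mult.assoc)
  also have "\<dots> = (\<Sum>j=0..Suc n. q ^ ((m + 1) * j) * qbinom q (Suc n + m - j) m)"
    by (simp only: sum.atLeast0_atMost_Suc_shift) (simp add: ac_simps)
  finally show ?case .
qed

lemma q_hockey_stick':
  assumes "\<bar>q\<bar> < 1"
  shows "qbinom q (n + m + 1) (m + 1) = (\<Sum>k=0..n. qbinom q (n + m - k) m * q ^ (n - k))"
proof (induction n)
  case 0
  show ?case using qbinom_self[OF assms] by simp
next
  case (Suc n)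
  have "qbinom q (Suc n + m + 1) (m + 1) =
      qbinom q (Suc n + m) m * q ^ Suc n + qbinom q (n + m + 1) (m + 1)"
    using qbinom_Suc_Suc(2)[OF assms, of m "n + m + 1"] by simp
  also have "\<dots> = qbinom q (Suc n + m) m * q ^ Suc n +
      (\<Sum>k=0..n. qbinom q (Suc n + m - Suc k) m * q ^ (Suc n - Suc k))"
    unfolding Suc by simp
  also have "\<dots> = (\<Sum>k=0..Suc n. qbinom q (Suc n + m - k) m * q ^ (Suc n - k))"
    by (simp only: sum.atLeast0_atMost_Suc_shift) simp
  finally show ?case .
qed

lemma sum_pairs_symmetrize:
  fixes F :: "'a \<Rightarrow> 'a \<Rightarrow> 'b::comm_semiring_1"
  assumes "\<And>j k. (j, k) \<in> A \<Longrightarrow> (k, j) \<in> A"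
    and "\<And>j k. (j, k) \<in> A \<Longrightarrow> F j k = F k j"
  shows "(\<Sum>(j, k)\<in>A. F j k * (a j + a k)) = 2 * (\<Sum>(j, k)\<in>A. F j k * a j)"
proof -
  have "(\<Sum>(j, k)\<in>A. F j k * a k) = (\<Sum>(j, k)\<in>A. F j k * a j)"
    by (rule sum.reindex_bij_witness[where i = "\<lambda>(j, k). (k, j)" and j = "\<lambda>(j, k). (k, j)"])
      (use assms in auto)
  then show ?thesis
    by (simp add: distrib_left sum.distrib case_prod_beta mult_2)
qed

lemma sum_triangle:
  fixes n :: nat
  shows "(\<Sum>(j, k)\<in>{(j, k). j + k \<le> n}. f j k) = (\<Sum>j=0..n. \<Sum>k=0..n - j. f j k)"
proof -
  have "{(j, k). j + k \<le> n} = Sigma {0..n} (\<lambda>j. {0..n - j})"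
    by auto
  then show ?thesis
    by (simp add: sum.Sigma)
qed

lemma qbinom_double_sum:
  assumes q: "\<bar>q\<bar> < 1"
  shows "qbinom q (n + m + 2) (m + 2) =
    (1/2) * (\<Sum>(j, k) \<in> {(j, k). j + k \<le> n}.
      qbinom q (n + m - j - k) m * q ^ (n - (j + k)) * (q ^ ((m + 2) * j) + q ^ ((m + 2) * k)))"
proof -
  define F where "F j k = qbinom q (n + m - j - k) m * q ^ (n - (j + k))" for j k
  define a where "a j = q ^ ((m + 2) * j)" for j
  have row: "a j * (\<Sum>k=0..n - j. F j k) = q ^ ((m + 1 + 1) * j) * qbinom q (n + (m + 1) - j) (m + 1)"
    if "j \<le> n" for j
  proof -
    have "(\<Sum>k=0..n - j. F j k) = (\<Sum>k=0..n - j. qbinom q (n - j + m - k) m * q ^ (n - j - k))"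
      using that by (simp add: F_def diff_diff_left)
    also have "\<dots> = qbinom q (n + (m + 1) - j) (m + 1)"
      using that q_hockey_stick'[OF q, of "n - j" m] by (simp add: Suc_diff_le)
    finally show ?thesis
      by (simp add: a_def)
  qed
  have "(1/2) * (\<Sum>(j, k)\<in>{(j, k). j + k \<le> n}. F j k * (a j + a k)) =
      (\<Sum>(j, k)\<in>{(j, k). j + k \<le> n}. F j k * a j)"
    by (subst sum_pairs_symmetrize) (auto simp: F_def add.commute diff_diff_left)
  also have "\<dots> = (\<Sum>j=0..n. a j * (\<Sum>k=0..n - j. F j k))"
    by (simp add: sum_triangle sum_distrib_left mult.commute)
  also have "\<dots> = (\<Sum>j=0..n. q ^ ((m + 1 + 1) * j) * qbinom q (n + (m + 1) - j) (m + 1))"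
    by (rule sum.cong) (simp_all add: row)
  also have "\<dots> = qbinom q (n + m + 2) (m + 2)"
    using q_hockey_stick[OF q, of n "m + 1"] by simp
  finally show ?thesis
    by (simp add: F_def a_def)
qed

theorem theorem2p3:
  fixes q :: real and m n :: nat
  assumes "0 < q" and "q < 1"
  shows "qbinom q (n + m + 1) (m + 1) = (\<Sum>j=0..n. q ^ ((m + 1) * j) * qbinom q (n + m - j) m) \<and>
         qbinom q (n + m + 2) (m + 2) =
           (1/2) * (\<Sum>(j, k) \<in> {(j, k). j + k \<le> n}.
              qbinom q (n + m - j - k) m * q ^ (n - (j + k)) * (q ^ ((m + 2) * j) + q ^ ((m + 2) * k)))"
proof -
  have "\<bar>q\<bar> < 1"
    using assms by simp
  then show ?thesis
    using q_hockey_stick qbinom_double_sum by blast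
qed

end
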